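(* Let $\ell$ be a positive integer. Any partial $(n,k,t)_\lambda$-system has an $\ell$-presequencing $(U_0,\ldots,U_{s-1})$ with $s=\lceil\sigma\rceil$, where \[ \sigma=\sigma(n,k,t,\lambda)=\left(e(2^k-1)\left(k\lambda\binom{n-1}{t-1}\binom{k-1}{t-1}^{-1}-k+1\right)\right)^{\frac{1}{k-1}} \] and $e$ is the base of the natural logarithm.
   Context: For positive integers $n,k,t,\lambda$ with $n \geq k > t \geq 2$, a partial $(n,k,t)_\lambda$-system is a pair $(X,\mathcal{B})$ where $X$ is an $n$-set of vertices and $\mathcal{B}$ is a collection of $k$-subsets of $X$ (blocks) such that each $t$-subset of $X$ is contained in at most $\lambda$ blocks. An independent set is a subset of $X$ containing no block. An $\ell$-buffered set is a triple $(S,S^{L},S^{R})$ with $S^{L},S^{R}\subseteq S$ (buffers) such that: (B1) if $|S|\le \ell-2$ then $S^{L}=S^{R}=S$; (B2) if $\ell-1\le |S|\le 2\ell-2$ then $|S^{L}|=|S^{R}|=\ell-1$ and $S^{L}\cup S^{R}=S$; (B3) if $|S|\ge 2\ell-1$ then $|S^{L}|=|S^{R}|=\ell-1$ and $S^{L}\cap S^{R}=\emptyset$. An $\ell$-presequencing of $(X,\mathcal{B})$ is a tuple $(X_0,\ldots,X_{s-1})$ of $\ell$-buffered sets (classes) whose underlying sets partition $X$, such that (P1) each $X_i$ is independent, and (P2) for each $i\in\mathbb{Z}_s$, $X_i^{R}\cup X_{i+1}^{L}$ is independent (indices mod $s$). *)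

theory Defs
  imports Complex_Main "HOL-Library.Multiset"
begin

definition partial_system ::
  "nat \<Rightarrow> nat \<Rightarrow> nat \<Rightarrow> nat \<Rightarrow> 'a set \<Rightarrow> 'a set multiset \<Rightarrow> bool" where
  "partial_system n k t lam X B \<longleftrightarrow>
     finite X \<and> card X = n \<and>
     (\<forall>b \<in># B. b \<subseteq> X \<and> card b = k) \<and>
     (\<forall>T. T \<subseteq> X \<and> card T = t \<longrightarrow> size (filter_mset (\<lambda>b. T \<subseteq> b) B) \<le> lam)"

definition independent :: "'a set multiset \<Rightarrow> 'a set \<Rightarrow> bool" where
  "independent B S \<longleftrightarrow> (\<forall>b \<in># B. \<not> b \<subseteq> S)"

definition buffered :: "nat \<Rightarrow> 'a set \<Rightarrow> 'a set \<Rightarrow> 'a set \<Rightarrow> bool" where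
  "buffered l S SL SR \<longleftrightarrow>
     SL \<subseteq> S \<and> SR \<subseteq> S \<and>
     (int (card S) \<le> int l - 2 \<longrightarrow> SL = S \<and> SR = S) \<and>
     (int l - 1 \<le> int (card S) \<and> int (card S) \<le> 2 * int l - 2 \<longrightarrow>
        card SL = l - 1 \<and> card SR = l - 1 \<and> SL \<union> SR = S) \<and>
     (2 * int l - 1 \<le> int (card S) \<longrightarrow>
        card SL = l - 1 \<and> card SR = l - 1 \<and> SL \<inter> SR = {})"

text \<open>An l-presequencing (U_0,...,U_{s-1}); class i is the triple U i = (S, S^L, S^R).
  Classes may be empty; indices are taken modulo s.\<close>
definition presequencing ::
  "nat \<Rightarrow> 'a set \<Rightarrow> 'a set multiset \<Rightarrow> nat \<Rightarrow> (nat \<Rightarrow> 'a set \<times> 'a set \<times> 'a set) \<Rightarrow> bool" where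
  "presequencing l X B s U \<longleftrightarrow>
     (\<forall>i<s. buffered l (fst (U i)) (fst (snd (U i))) (snd (snd (U i)))) \<and>
     (\<Union>i<s. fst (U i)) = X \<and>
     (\<forall>i<s. \<forall>j<s. i \<noteq> j \<longrightarrow> fst (U i) \<inter> fst (U j) = {}) \<and>
     (\<forall>i<s. independent B (fst (U i))) \<and>
     (\<forall>i<s. independent B (snd (snd (U i)) \<union> fst (snd (U ((i + 1) mod s)))))"

definition sigma :: "nat \<Rightarrow> nat \<Rightarrow> nat \<Rightarrow> nat \<Rightarrow> real" where
  "sigma n k t lam =
     (exp 1 * (2 ^ k - 1) *
       (real k * real lam * real ((n - 1) choose (t - 1)) / real ((k - 1) choose (t - 1))
        - real k + 1)) powr (1 / (real k - 1))"

end

(* Colour the vertices with s colours and take the colour classes as the U_i, with arbitrary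
   buffers. Conditions (P1) and (P2) hold as soon as no block is coloured within a pair
   {i, i + 1 mod s} of cyclically consecutive colours. For a uniformly random colouring this bad
   event has probability at most s (2^k - 1) / s^k for each block b, it depends only on the colours
   of b, and b meets at most k (lambda C(n-1,t-1) / C(k-1,t-1) - 1) other blocks. The value of
   sigma is exactly what the symmetric Lovasz local lemma needs, here proved in counting form:
   some colouring avoids every bad event. *)

theory Submission
  imports Defs "HOL-Library.FuncSet"
begin

definition avoiding :: "'w set \<Rightarrow> ('i \<Rightarrow> 'w set) \<Rightarrow> 'i set \<Rightarrow> 'w set" where
  "avoiding \<Omega> A S = \<Omega> - \<Union>(A ` S)"

lemma finite_avoiding: "finite \<Omega> \<Longrightarrow> finite (avoiding \<Omega> A S)"
  by (simp add: avoiding_def)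

lemma avoiding_Un_insert: "avoiding \<Omega> A (S \<union> insert j T) = avoiding \<Omega> A (S \<union> T) - A j"
  unfolding avoiding_def by auto

lemma card_avoiding_ge_power:
  assumes "finite \<Omega>" "finite T" "0 \<le> y" "y \<le> 1"
    and "\<And>T' j. T' \<subseteq> T \<Longrightarrow> j \<in> T - T' \<Longrightarrow>
      real (card (A j \<inter> avoiding \<Omega> A (S \<union> T'))) \<le> y * real (card (avoiding \<Omega> A (S \<union> T')))"
  shows "(1 - y) ^ card T * real (card (avoiding \<Omega> A S)) \<le> real (card (avoiding \<Omega> A (S \<union> T)))"
  using assms(2,5)
proof (induction T rule: finite_induct)
  case empty
  then show ?case by simp
next
  case (insert j T)
  let ?N = "avoiding \<Omega> A (S \<union> T)"
  have "card ?N = card (A j \<inter> ?N) + card (avoiding \<Omega> A (S \<union> insert j T))"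
    unfolding avoiding_Un_insert Int_commute[of "A j"]
    by (rule card_Int_Diff[OF finite_avoiding[OF \<open>finite \<Omega>\<close>]])
  then have "real (card ?N) = real (card (A j \<inter> ?N)) + real (card (avoiding \<Omega> A (S \<union> insert j T)))"
    by (metis of_nat_add)
  moreover have "real (card (A j \<inter> ?N)) \<le> y * real (card ?N)"
    using insert.prems[of T j] insert.hyps by blast
  ultimately have "(1 - y) * real (card ?N) \<le> real (card (avoiding \<Omega> A (S \<union> insert j T)))"
    by (simp add: algebra_simps)
  moreover have "(1 - y) * ((1 - y) ^ card T * real (card (avoiding \<Omega> A S))) \<le> (1 - y) * real (card ?N)"
    using insert.IH insert.prems \<open>y \<le> 1\<close> by (intro mult_left_mono) auto
  ultimately show ?case
    using insert.hyps by (simp add: mult.assoc)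
qed

lemma card_event_avoiding_le:
  assumes "finite \<Omega>" "finite I" "0 \<le> y" "y \<le> 1"
    and "\<And>i. i \<in> I \<Longrightarrow> G i \<subseteq> I" "\<And>i. i \<in> I \<Longrightarrow> card (G i) \<le> d"
    and indep: "\<And>i S. i \<in> I \<Longrightarrow> S \<subseteq> I - G i - {i} \<Longrightarrow>
      real (card (A i \<inter> avoiding \<Omega> A S)) \<le> p * real (card (avoiding \<Omega> A S))"
    and "p \<le> y * (1 - y) ^ d"
  shows "S \<subseteq> I \<Longrightarrow> i \<in> I \<Longrightarrow> i \<notin> S \<Longrightarrow>
    real (card (A i \<inter> avoiding \<Omega> A S)) \<le> y * real (card (avoiding \<Omega> A S))"
proof (induction "card S" arbitrary: S i rule: less_induct)
  case less
  \<comment> \<open>Split S into the neighbours S1 of i and the rest S2: the event A i is independent of S2,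
    and avoiding the neighbours costs at most a factor (1 - y) each, by induction.\<close>
  define S1 where "S1 = S \<inter> G i"
  define S2 where "S2 = S - G i"
  have "finite S" using less.prems \<open>finite I\<close> finite_subset by blast
  have "finite (G i)" using assms(5) less.prems(2) \<open>finite I\<close> finite_subset by blast
  then have "card S1 \<le> card (G i)" unfolding S1_def by (simp add: card_mono)
  then have "card S1 \<le> d" using assms(6) less.prems(2) by (meson order_trans)
  have "(1 - y) ^ card S1 * real (card (avoiding \<Omega> A S2)) \<le> real (card (avoiding \<Omega> A (S2 \<union> S1)))"
  proof (rule card_avoiding_ge_power[OF \<open>finite \<Omega>\<close> _ \<open>0 \<le> y\<close> \<open>y \<le> 1\<close>])
    show "finite S1" using \<open>finite S\<close> by (simp add: S1_def)
    fix T j assume "T \<subseteq> S1" "j \<in> S1 - T"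
    then have "S2 \<union> T \<subset> S" "S2 \<union> T \<subseteq> I" "j \<in> I" "j \<notin> S2 \<union> T"
      using less.prems unfolding S1_def S2_def by auto
    then show "real (card (A j \<inter> avoiding \<Omega> A (S2 \<union> T))) \<le> y * real (card (avoiding \<Omega> A (S2 \<union> T)))"
      using less.hyps[of "S2 \<union> T" j] psubset_card_mono[OF \<open>finite S\<close>] by blast
  qed
  moreover have "S2 \<union> S1 = S" unfolding S1_def S2_def by auto
  moreover have "(1 - y) ^ d \<le> (1 - y) ^ card S1"
    using \<open>card S1 \<le> d\<close> assms(3,4) by (intro power_decreasing) auto
  ultimately have "(1 - y) ^ d * real (card (avoiding \<Omega> A S2)) \<le> real (card (avoiding \<Omega> A S))"
    by (meson mult_right_mono of_nat_0_le_iff order_trans)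
  then have denominator: "y * (1 - y) ^ d * real (card (avoiding \<Omega> A S2)) \<le> y * real (card (avoiding \<Omega> A S))"
    unfolding mult.assoc using \<open>0 \<le> y\<close> by (rule mult_left_mono)
  have "real (card (A i \<inter> avoiding \<Omega> A S)) \<le> real (card (A i \<inter> avoiding \<Omega> A S2))"
    using finite_avoiding[OF \<open>finite \<Omega>\<close>]
    by (intro of_nat_mono card_mono) (auto simp: avoiding_def S2_def)
  also have "\<dots> \<le> p * real (card (avoiding \<Omega> A S2))"
    by (rule indep) (use less.prems in \<open>auto simp: S2_def\<close>)
  also have "\<dots> \<le> y * (1 - y) ^ d * real (card (avoiding \<Omega> A S2))"
    using \<open>p \<le> y * (1 - y) ^ d\<close> by (intro mult_right_mono) auto
  finally show ?case using denominator by linarith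
qed

lemma avoiding_nonempty:
  assumes "finite \<Omega>" "\<Omega> \<noteq> {}" "finite I" "0 \<le> y" "y < 1"
    and "\<And>i. i \<in> I \<Longrightarrow> G i \<subseteq> I" "\<And>i. i \<in> I \<Longrightarrow> card (G i) \<le> d"
    and "\<And>i S. i \<in> I \<Longrightarrow> S \<subseteq> I - G i - {i} \<Longrightarrow>
      real (card (A i \<inter> avoiding \<Omega> A S)) \<le> p * real (card (avoiding \<Omega> A S))"
    and "p \<le> y * (1 - y) ^ d"
  shows "avoiding \<Omega> A I \<noteq> {}"
proof -
  have "(1 - y) ^ card I * real (card (avoiding \<Omega> A {})) \<le> real (card (avoiding \<Omega> A ({} \<union> I)))"
  proof (rule card_avoiding_ge_power[OF assms(1,3)])
    show "0 \<le> y" "y \<le> 1" using assms(4,5) by auto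
    fix T j assume "T \<subseteq> I" "j \<in> I - T"
    then show "real (card (A j \<inter> avoiding \<Omega> A ({} \<union> T))) \<le> y * real (card (avoiding \<Omega> A ({} \<union> T)))"
      using card_event_avoiding_le[OF assms(1,3,4) _ assms(6-9), where S = T and i = j] assms(5) by auto
  qed
  moreover have "0 < (1 - y) ^ card I * real (card (avoiding \<Omega> A {}))"
    using assms(1,2,5) by (simp add: avoiding_def card_gt_0_iff)
  ultimately show ?thesis by auto
qed

lemma exists_local_lemma_weight:
  fixes p :: real
  assumes "0 \<le> p" "exp 1 * p * (real d + 1) \<le> 1"
  obtains y where "0 \<le> y" "y < 1" "p \<le> y * (1 - y) ^ d"
proof (cases "d = 0")
  case True
  then have "p \<le> 1 / exp 1" using assms by (simp add: field_simps)
  moreover have "1 / exp 1 < (1::real)" by simp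
  ultimately have "p < 1" by linarith
  then show ?thesis using True assms that by simp
next
  case False
  define y where "y = 1 / (real d + 1)"
  have "(1 + 1 / real d) ^ d \<le> exp (1 / real d) ^ d"
    by (intro power_mono) (auto simp: add.commute)
  also have "\<dots> = exp 1" using False by (simp add: exp_of_nat_mult[symmetric])
  finally have "1 / exp 1 \<le> 1 / (1 + 1 / real d) ^ d"
    by (intro divide_left_mono) (auto simp: add_pos_nonneg)
  also have "\<dots> = (1 - y) ^ d" using False by (simp add: y_def field_simps power_divide)
  finally have "y * (1 / exp 1) \<le> y * (1 - y) ^ d" by (rule mult_left_mono) (simp add: y_def)
  moreover have "p \<le> y * (1 / exp 1)"
  proof -
    have "p * (exp 1 * (real d + 1)) \<le> 1" using assms(2) by (simp add: mult_ac)
    then show ?thesis by (simp add: y_def pos_le_divide_eq add_pos_pos mult.commute)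
  qed
  ultimately have "p \<le> y * (1 - y) ^ d" by linarith
  moreover have "0 \<le> y" "y < 1" using False by (auto simp: y_def)
  ultimately show ?thesis using that by blast
qed

lemma avoiding_nonempty_symmetric:
  assumes "finite \<Omega>" "\<Omega> \<noteq> {}" "finite I"
    and "\<And>i. i \<in> I \<Longrightarrow> G i \<subseteq> I" "\<And>i. i \<in> I \<Longrightarrow> card (G i) \<le> d"
    and "\<And>i S. i \<in> I \<Longrightarrow> S \<subseteq> I - G i - {i} \<Longrightarrow>
      real (card (A i \<inter> avoiding \<Omega> A S)) \<le> p * real (card (avoiding \<Omega> A S))"
    and "0 \<le> p" "exp 1 * p * (real d + 1) \<le> 1"
  shows "avoiding \<Omega> A I \<noteq> {}"
proof -
  obtain y where y: "0 \<le> y" "y < 1" "p \<le> y * (1 - y) ^ d"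
    using exists_local_lemma_weight[OF assms(7,8)] by blast
  show ?thesis by (rule avoiding_nonempty[OF assms(1-3) y(1,2) assms(4-6) y(3)])
qed

lemma card_set_mset_le_size: "card (set_mset M) \<le> size M"
  by (induction M) (simp_all add: card_insert_if)

lemma card_subsets_containing:
  assumes "finite Y" "v \<in> Y" "1 \<le> t"
  shows "card {T. T \<subseteq> Y \<and> v \<in> T \<and> card T = t} = (card Y - 1) choose (t - 1)"
proof -
  have "bij_betw (insert v) {T. T \<subseteq> Y - {v} \<and> card T = t - 1} {T. T \<subseteq> Y \<and> v \<in> T \<and> card T = t}"
  proof (rule bij_betw_byWitness[where f' = "\<lambda>T. T - {v}"])
    have "card (insert v T) = t" if "T \<subseteq> Y - {v}" "card T = t - 1" for T
      using that assms finite_subset[OF _ \<open>finite Y\<close>] by (subst card_insert_disjoint) auto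
    then show "insert v ` {T. T \<subseteq> Y - {v} \<and> card T = t - 1} \<subseteq> {T. T \<subseteq> Y \<and> v \<in> T \<and> card T = t}"
      using assms by auto
    show "(\<lambda>T. T - {v}) ` {T. T \<subseteq> Y \<and> v \<in> T \<and> card T = t} \<subseteq> {T. T \<subseteq> Y - {v} \<and> card T = t - 1}"
      using assms(1) by (auto dest: finite_subset)
  qed auto
  then have "card {T. T \<subseteq> Y \<and> v \<in> T \<and> card T = t} = card {T. T \<subseteq> Y - {v} \<and> card T = t - 1}"
    by (simp add: bij_betw_same_card)
  also have "\<dots> = (card Y - 1) choose (t - 1)"
    using assms by (simp add: n_subsets)
  finally show ?thesis .
qed

lemma card_blocks_containing_le:
  assumes "partial_system n k t lam X B" "v \<in> X" "1 \<le> t"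
  shows "card {b \<in> set_mset B. v \<in> b} * ((k - 1) choose (t - 1)) \<le> lam * ((n - 1) choose (t - 1))"
proof -
  define Bv where "Bv = {b \<in> set_mset B. v \<in> b}"
  define Tv where "Tv = {T. T \<subseteq> X \<and> v \<in> T \<and> card T = t}"
  have "finite X" "card X = n" and blocks: "\<And>b. b \<in># B \<Longrightarrow> b \<subseteq> X \<and> card b = k"
    and lam: "\<And>T. T \<subseteq> X \<Longrightarrow> card T = t \<Longrightarrow> size (filter_mset (\<lambda>b. T \<subseteq> b) B) \<le> lam"
    using assms(1) unfolding partial_system_def by auto
  have "finite Tv" using \<open>finite X\<close> unfolding Tv_def by (simp add: finite_subset[of _ "Pow X"] subset_eq)
  \<comment> \<open>Double counting the pairs (b, T) with v \<in> T \<subseteq> b and card T = t.\<close>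
  have "card Bv * ((k - 1) choose (t - 1)) = (\<Sum>b\<in>Bv. card {T\<in>Tv. T \<subseteq> b})"
  proof -
    have "card {T\<in>Tv. T \<subseteq> b} = (k - 1) choose (t - 1)" if "b \<in> Bv" for b
    proof -
      have "b \<subseteq> X" "card b = k" "v \<in> b" using that blocks unfolding Bv_def by auto
      moreover have "{T\<in>Tv. T \<subseteq> b} = {T. T \<subseteq> b \<and> v \<in> T \<and> card T = t}"
        using \<open>b \<subseteq> X\<close> unfolding Tv_def by auto
      ultimately show ?thesis
        using card_subsets_containing[of b v t] \<open>finite X\<close> assms(3) finite_subset by metis
    qed
    then show ?thesis by simp
  qed
  also have "\<dots> = (\<Sum>b\<in>Bv. \<Sum>T\<in>Tv. of_bool (T \<subseteq> b))"
    using \<open>finite Tv\<close> by (simp add: Int_def)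
  also have "\<dots> = (\<Sum>T\<in>Tv. \<Sum>b\<in>Bv. of_bool (T \<subseteq> b))"
    by (rule sum.swap)
  also have "\<dots> = (\<Sum>T\<in>Tv. card {b\<in>Bv. T \<subseteq> b})"
    by (simp add: Int_def Bv_def)
  also have "\<dots> \<le> (\<Sum>T\<in>Tv. lam)"
  proof (rule sum_mono)
    fix T assume "T \<in> Tv"
    have "card {b\<in>Bv. T \<subseteq> b} \<le> card (set_mset (filter_mset (\<lambda>b. T \<subseteq> b) B))"
      unfolding Bv_def by (intro card_mono) auto
    also have "\<dots> \<le> lam"
      using card_set_mset_le_size lam \<open>T \<in> Tv\<close> unfolding Tv_def by (blast intro: order_trans)
    finally show "card {b\<in>Bv. T \<subseteq> b} \<le> lam" .
  qed
  also have "\<dots> = lam * ((n - 1) choose (t - 1))"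
    unfolding Tv_def using card_subsets_containing[OF \<open>finite X\<close> assms(2,3)] \<open>card X = n\<close> by simp
  finally show ?thesis unfolding Bv_def .
qed

definition meeting_bound :: "nat \<Rightarrow> nat \<Rightarrow> nat \<Rightarrow> nat \<Rightarrow> real" where
  "meeting_bound n k t lam =
     real k * real lam * real ((n - 1) choose (t - 1)) / real ((k - 1) choose (t - 1)) - real k"

lemma meeting_bound_nonneg:
  assumes "0 < lam" "1 \<le> t" "t \<le> k" "k \<le> n"
  shows "0 \<le> meeting_bound n k t lam"
proof -
  have "0 < (k - 1) choose (t - 1)" using assms by simp
  have "(k - 1) choose (t - 1) \<le> (n - 1) choose (t - 1)"
    using assms(4) by (intro binomial_right_mono) simp
  also have "\<dots> \<le> lam * ((n - 1) choose (t - 1))"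
    using assms(1) by simp
  finally have "1 \<le> real lam * real ((n - 1) choose (t - 1)) / real ((k - 1) choose (t - 1))"
    using \<open>0 < (k - 1) choose (t - 1)\<close> by (simp add: le_divide_eq flip: of_nat_mult)
  then have "real k * 1 \<le> real k * (real lam * real ((n - 1) choose (t - 1)) / real ((k - 1) choose (t - 1)))"
    by (rule mult_left_mono) simp
  then show ?thesis
    unfolding meeting_bound_def by simp
qed

lemma card_blocks_meeting_le:
  assumes "partial_system n k t lam X B" "b \<in># B" "1 \<le> t" "t \<le> k"
  shows "real (card {b' \<in> set_mset B. b' \<noteq> b \<and> b' \<inter> b \<noteq> {}}) \<le> meeting_bound n k t lam"
proof -
  define deg where "deg v = {b' \<in> set_mset B. v \<in> b'}" for v
  define r where "r = real lam * real ((n - 1) choose (t - 1)) / real ((k - 1) choose (t - 1))"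
  have "b \<subseteq> X" "card b = k" "finite b"
    using assms(1,2) unfolding partial_system_def by (auto intro: finite_subset)
  have deg_le: "real (card (deg v - {b})) \<le> r - 1" if "v \<in> b" for v
  proof -
    have "0 < (k - 1) choose (t - 1)" using assms(3,4) by simp
    moreover have "card (deg v) * ((k - 1) choose (t - 1)) \<le> lam * ((n - 1) choose (t - 1))"
      using card_blocks_containing_le[OF assms(1) _ assms(3)] \<open>b \<subseteq> X\<close> that
      unfolding deg_def by blast
    ultimately have "real (card (deg v)) \<le> r"
      unfolding r_def by (simp add: le_divide_eq flip: of_nat_mult)
    moreover have "b \<in> deg v" using assms(2) that unfolding deg_def by simp
    then have "card (deg v - {b}) = card (deg v) - 1" "0 < card (deg v)"
      by (auto simp: deg_def card_Diff_singleton card_gt_0_iff)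
    ultimately show ?thesis by (simp add: of_nat_diff)
  qed
  have "{b' \<in> set_mset B. b' \<noteq> b \<and> b' \<inter> b \<noteq> {}} \<subseteq> (\<Union>v\<in>b. deg v - {b})"
    unfolding deg_def by auto
  then have "card {b' \<in> set_mset B. b' \<noteq> b \<and> b' \<inter> b \<noteq> {}} \<le> card (\<Union>v\<in>b. deg v - {b})"
    by (rule card_mono[rotated]) (auto simp: deg_def intro: finite_subset[of _ "set_mset B"])
  also have "\<dots> \<le> (\<Sum>v\<in>b. card (deg v - {b}))"
    using \<open>finite b\<close> by (rule card_UN_le)
  finally have "real (card {b' \<in> set_mset B. b' \<noteq> b \<and> b' \<inter> b \<noteq> {}}) \<le> (\<Sum>v\<in>b. real (card (deg v - {b})))"
    by (simp flip: of_nat_sum)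
  also have "\<dots> \<le> (\<Sum>v\<in>b. r - 1)" using deg_le by (rule sum_mono)
  also have "\<dots> = meeting_bound n k t lam"
    using \<open>card b = k\<close> by (simp add: meeting_bound_def r_def algebra_simps)
  finally show ?thesis .
qed

definition consecutive_coloured :: "nat \<Rightarrow> ('a \<Rightarrow> nat) \<Rightarrow> 'a set \<Rightarrow> bool" where
  "consecutive_coloured s f b \<longleftrightarrow> (\<exists>i<s. f ` b \<subseteq> {i, (i + 1) mod s})"

definition colour_event :: "'a set \<Rightarrow> nat \<Rightarrow> 'a set \<Rightarrow> ('a \<Rightarrow> nat) set" where
  "colour_event X s b = {f \<in> X \<rightarrow>\<^sub>E {..<s}. consecutive_coloured s f b}"

lemma consecutive_coloured_restrict:
  assumes "b \<subseteq> Y"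
  shows "consecutive_coloured s (restrict f Y) b \<longleftrightarrow> consecutive_coloured s f b"
proof -
  have "restrict f Y ` b = f ` b" using assms by auto
  then show ?thesis by (simp add: consecutive_coloured_def)
qed

lemma consecutive_coloured_attained:
  assumes "consecutive_coloured s g b" "b \<noteq> {}"
  obtains i where "i < s" "i \<in> g ` b" "g ` b \<subseteq> {i, (i + 1) mod s}"
proof -
  obtain i where "i < s" "g ` b \<subseteq> {i, (i + 1) mod s}"
    using assms(1) unfolding consecutive_coloured_def by blast
  show ?thesis
  proof (cases "i \<in> g ` b")
    case True
    then show ?thesis using that \<open>i < s\<close> \<open>g ` b \<subseteq> {i, (i + 1) mod s}\<close> by blast
  next
    case False
    then have "g ` b \<subseteq> {(i + 1) mod s}"
      using \<open>g ` b \<subseteq> {i, (i + 1) mod s}\<close> by blast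
    then have "g ` b = {(i + 1) mod s}"
      using assms(2) by (auto dest: subset_singletonD)
    then show ?thesis using that[of "(i + 1) mod s"] \<open>i < s\<close> by simp
  qed
qed

lemma card_consecutive_coloured_le:
  assumes "finite b" "b \<noteq> {}"
  shows "card {g \<in> b \<rightarrow>\<^sub>E {..<s}. consecutive_coloured s g b} \<le> s * (2 ^ card b - 1)"
proof -
  \<comment> \<open>A colouring is determined by its lower colour i, which it attains, and the proper subset
    of b receiving the colour i + 1.\<close>
  define colouring where "colouring i W = (\<lambda>x\<in>b. if x \<in> W then (i + 1) mod s else i)" for i W
  have "{g \<in> b \<rightarrow>\<^sub>E {..<s}. consecutive_coloured s g b} \<subseteq> (\<Union>i<s. colouring i ` (Pow b - {b}))"
  proof
    fix g assume g: "g \<in> {g \<in> b \<rightarrow>\<^sub>E {..<s}. consecutive_coloured s g b}"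
    then obtain i where "i < s" "i \<in> g ` b" "g ` b \<subseteq> {i, (i + 1) mod s}"
      using consecutive_coloured_attained assms(2) by blast
    then have "g = colouring i {x \<in> b. g x \<noteq> i}"
      using g by (fastforce simp: colouring_def PiE_iff extensional_def)
    moreover have "{x \<in> b. g x \<noteq> i} \<in> Pow b - {b}"
      using \<open>i \<in> g ` b\<close> by auto
    ultimately show "g \<in> (\<Union>i<s. colouring i ` (Pow b - {b}))"
      using \<open>i < s\<close> by blast
  qed
  then have "card {g \<in> b \<rightarrow>\<^sub>E {..<s}. consecutive_coloured s g b} \<le> card (\<Union>i<s. colouring i ` (Pow b - {b}))"
    by (rule card_mono[rotated]) (simp add: assms(1))
  also have "\<dots> \<le> (\<Sum>i<s. card (colouring i ` (Pow b - {b})))"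
    by (rule card_UN_le) simp
  also have "\<dots> \<le> (\<Sum>i<s. card (Pow b - {b}))"
    by (intro sum_mono card_image_le) (simp add: assms(1))
  also have "\<dots> = s * (2 ^ card b - 1)"
    using assms(1) by (simp add: card_Pow)
  finally show ?thesis .
qed

lemma card_PiE_restrict_split:
  assumes "Y \<subseteq> X"
  shows "card {f \<in> X \<rightarrow>\<^sub>E C. P (restrict f Y) \<and> Q (restrict f (X - Y))}
       = card {g \<in> Y \<rightarrow>\<^sub>E C. P g} * card {g \<in> (X - Y) \<rightarrow>\<^sub>E C. Q g}"
proof -
  let ?L = "{f \<in> X \<rightarrow>\<^sub>E C. P (restrict f Y) \<and> Q (restrict f (X - Y))}"
  let ?R = "{g \<in> Y \<rightarrow>\<^sub>E C. P g} \<times> {g \<in> (X - Y) \<rightarrow>\<^sub>E C. Q g}"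
  have "bij_betw (\<lambda>f. (restrict f Y, restrict f (X - Y))) ?L ?R"
  proof (rule bij_betw_byWitness[where f' = "\<lambda>(g, h) x. if x \<in> Y then g x else h x"])
    show "\<forall>f\<in>?L. (\<lambda>(g, h) x. if x \<in> Y then g x else h x) (restrict f Y, restrict f (X - Y)) = f"
      using assms by (auto simp: fun_eq_iff PiE_def extensional_def)
    show "\<forall>gh\<in>?R. (\<lambda>f. (restrict f Y, restrict f (X - Y))) ((\<lambda>(g, h) x. if x \<in> Y then g x else h x) gh) = gh"
      by (auto simp: fun_eq_iff PiE_def extensional_def)
    show "(\<lambda>f. (restrict f Y, restrict f (X - Y))) ` ?L \<subseteq> ?R"
      using assms by (auto simp: PiE_iff)
    have "restrict (\<lambda>x. if x \<in> Y then g x else h x) Y = g"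
      "restrict (\<lambda>x. if x \<in> Y then g x else h x) (X - Y) = h"
      if "g \<in> Y \<rightarrow>\<^sub>E C" "h \<in> (X - Y) \<rightarrow>\<^sub>E C" for g h
      using that by (auto simp: fun_eq_iff PiE_def extensional_def)
    then show "(\<lambda>(g, h) x. if x \<in> Y then g x else h x) ` ?R \<subseteq> ?L"
      using assms by (fastforce simp: PiE_def extensional_def Pi_def)
  qed
  then show ?thesis by (simp add: bij_betw_same_card card_cartesian_product)
qed

lemma card_colour_event_avoiding_le:
  assumes "finite X" "b \<subseteq> X" "b \<noteq> {}" "0 < s" "\<And>b'. b' \<in> S \<Longrightarrow> b' \<subseteq> X - b"
  shows "real (card (colour_event X s b \<inter> avoiding (X \<rightarrow>\<^sub>E {..<s}) (colour_event X s) S))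
    \<le> (2 ^ card b - 1) / real s ^ (card b - 1) * real (card (avoiding (X \<rightarrow>\<^sub>E {..<s}) (colour_event X s) S))"
proof -
  define Q where "Q g \<longleftrightarrow> (\<forall>b'\<in>S. \<not> consecutive_coloured s g b')" for g :: "'a \<Rightarrow> nat"
  define F where "F = card {g \<in> (X - b) \<rightarrow>\<^sub>E {..<s}. Q g}"
  have "finite b" using assms(1,2) finite_subset by blast
  have avoiding_eq: "avoiding (X \<rightarrow>\<^sub>E {..<s}) (colour_event X s) S
      = {f \<in> X \<rightarrow>\<^sub>E {..<s}. (\<lambda>_. True) (restrict f b) \<and> Q (restrict f (X - b))}"
    using assms(5) by (auto simp: avoiding_def colour_event_def Q_def consecutive_coloured_restrict)
  have "card (colour_event X s b \<inter> avoiding (X \<rightarrow>\<^sub>E {..<s}) (colour_event X s) S)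
      = card {g \<in> b \<rightarrow>\<^sub>E {..<s}. consecutive_coloured s g b} * F"
  proof -
    have "colour_event X s b \<inter> avoiding (X \<rightarrow>\<^sub>E {..<s}) (colour_event X s) S
        = {f \<in> X \<rightarrow>\<^sub>E {..<s}. consecutive_coloured s (restrict f b) b \<and> Q (restrict f (X - b))}"
      unfolding avoiding_eq by (auto simp: colour_event_def consecutive_coloured_restrict)
    then have "card (colour_event X s b \<inter> avoiding (X \<rightarrow>\<^sub>E {..<s}) (colour_event X s) S)
        = card {f \<in> X \<rightarrow>\<^sub>E {..<s}. consecutive_coloured s (restrict f b) b \<and> Q (restrict f (X - b))}"
      by (simp only:)
    also have "\<dots> = card {g \<in> b \<rightarrow>\<^sub>E {..<s}. consecutive_coloured s g b} * F"
      unfolding F_def by (rule card_PiE_restrict_split[OF assms(2)])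
    finally show ?thesis .
  qed
  also have "\<dots> \<le> s * (2 ^ card b - 1) * F"
    using card_consecutive_coloured_le[OF \<open>finite b\<close> assms(3)] by simp
  finally have "real (card (colour_event X s b \<inter> avoiding (X \<rightarrow>\<^sub>E {..<s}) (colour_event X s) S))
      \<le> real (s * (2 ^ card b - 1) * F)"
    by (rule of_nat_mono)
  also have "\<dots> = real s * (2 ^ card b - 1) * real F"
    by (simp add: of_nat_diff)
  finally have numerator: "real (card (colour_event X s b \<inter> avoiding (X \<rightarrow>\<^sub>E {..<s}) (colour_event X s) S))
      \<le> real s * (2 ^ card b - 1) * real F" .
  have "card b = Suc (card b - 1)"
    using \<open>finite b\<close> assms(3) by (simp add: card_gt_0_iff)
  have "card (avoiding (X \<rightarrow>\<^sub>E {..<s}) (colour_event X s) S) = card {g \<in> b \<rightarrow>\<^sub>E {..<s}. True} * F"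
    unfolding avoiding_eq F_def by (rule card_PiE_restrict_split[OF assms(2)])
  also have "\<dots> = s * s ^ (card b - 1) * F"
    using \<open>finite b\<close> \<open>card b = Suc (card b - 1)\<close> by (simp add: card_PiE flip: power_Suc)
  finally have "(2 ^ card b - 1) / real s ^ (card b - 1) * real (card (avoiding (X \<rightarrow>\<^sub>E {..<s}) (colour_event X s) S))
      = real s * (2 ^ card b - 1) * real F"
    using \<open>0 < s\<close> by simp
  then show ?thesis using numerator by simp
qed

lemma buffered_exists:
  assumes "finite S" "0 < l"
  shows "\<exists>SL SR. buffered l S SL SR"
proof (cases "int (card S) \<le> int l - 2")
  case True
  then show ?thesis unfolding buffered_def by auto
next
  case False
  then have "l - 1 \<le> card S" by linarith
  then obtain SL where SL: "SL \<subseteq> S" "card SL = l - 1"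
    by (meson obtain_subset_with_card_n)
  show ?thesis
  proof (cases "int (card S) \<le> 2 * int l - 2")
    case True
    then have "card (S - SL) \<le> l - 1" using SL assms(1) by (simp add: card_Diff_subset finite_subset)
    then obtain SR where "S - SL \<subseteq> SR" "SR \<subseteq> S" "card SR = l - 1"
      using exists_subset_between[of "S - SL" "l - 1" S] \<open>l - 1 \<le> card S\<close> assms(1) by auto
    then have "buffered l S SL SR" using SL False True unfolding buffered_def by auto
    then show ?thesis by blast
  next
    case c2: False
    then have "l - 1 \<le> card (S - SL)" using SL assms(1) by (simp add: card_Diff_subset finite_subset)
    then obtain SR where "SR \<subseteq> S - SL" "card SR = l - 1"
      by (meson obtain_subset_with_card_n)
    then have "buffered l S SL SR" using SL False c2 unfolding buffered_def by auto
    then show ?thesis by blast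
  qed
qed

lemma presequencing_of_colouring:
  assumes "finite X" "0 < l" "f \<in> X \<rightarrow> {..<s}" "\<And>b. b \<in># B \<Longrightarrow> \<not> consecutive_coloured s f b"
  shows "\<exists>U. presequencing l X B s U"
proof -
  define colour_class where "colour_class i = {x \<in> X. f x = i}" for i
  have "finite (colour_class i)" for i
    using assms(1) by (simp add: colour_class_def)
  then have "\<forall>i. \<exists>SL SR. buffered l (colour_class i) SL SR"
    using buffered_exists[OF _ assms(2)] by blast
  then obtain L R where buffers: "\<And>i. buffered l (colour_class i) (L i) (R i)"
    by metis
  then have "L i \<subseteq> colour_class i" "R i \<subseteq> colour_class i" for i
    unfolding buffered_def by auto
  have independent: "independent B Z" if "i < s" "Z \<subseteq> colour_class i \<union> colour_class ((i + 1) mod s)" for i Z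
    using assms(4) that unfolding independent_def consecutive_coloured_def colour_class_def by blast
  have "presequencing l X B s (\<lambda>i. (colour_class i, L i, R i))"
    unfolding presequencing_def
  proof (intro conjI allI impI)
    show "(\<Union>i<s. fst (colour_class i, L i, R i)) = X"
      using assms(3) by (auto simp: colour_class_def)
    fix i assume "i < s"
    then show "independent B (fst (colour_class i, L i, R i))"
      by (intro independent[of i]) auto
    show "independent B (snd (snd (colour_class i, L i, R i)) \<union>
        fst (snd (colour_class ((i + 1) mod s), L ((i + 1) mod s), R ((i + 1) mod s))))"
      using \<open>i < s\<close> \<open>\<And>i. R i \<subseteq> colour_class i\<close> \<open>\<And>i. L i \<subseteq> colour_class i\<close>
      by (intro independent[of i]) auto
  qed (simp add: buffers, auto simp: colour_class_def)
  then show ?thesis by blast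
qed

lemma le_ceiling_root_power:
  assumes "1 < k" "0 < x"
  shows "x \<le> real (nat \<lceil>x powr (1 / (real k - 1))\<rceil>) ^ (k - 1)"
proof -
  have "x = (x powr (1 / (real k - 1))) ^ (k - 1)"
    using assms by (simp add: powr_realpow[symmetric] powr_powr of_nat_diff)
  also have "\<dots> \<le> real (nat \<lceil>x powr (1 / (real k - 1))\<rceil>) ^ (k - 1)"
    by (intro power_mono) (linarith, simp)
  finally show ?thesis .
qed

lemma sigma_local_lemma_condition:
  assumes "0 < lam" "1 \<le> t" "t < k" "k \<le> n"
  defines "s \<equiv> nat \<lceil>sigma n k t lam\<rceil>"
  shows "0 < s"
    and "exp 1 * ((2 ^ k - 1) / real s ^ (k - 1)) * (real (nat \<lfloor>meeting_bound n k t lam\<rfloor>) + 1) \<le> 1"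
proof -
  define x where "x = exp 1 * (2 ^ k - 1) * (meeting_bound n k t lam + 1)"
  have "0 \<le> meeting_bound n k t lam" using assms by (intro meeting_bound_nonneg) auto
  moreover have "(1::real) < 2 ^ k" using assms by simp
  ultimately have "0 < x" unfolding x_def by (simp add: add_nonneg_pos)
  have sigma_eq: "sigma n k t lam = x powr (1 / (real k - 1))"
    unfolding sigma_def x_def meeting_bound_def by (simp add: algebra_simps)
  have "x \<le> real s ^ (k - 1)"
    unfolding s_def sigma_eq using assms(2,3) \<open>0 < x\<close> by (intro le_ceiling_root_power) auto
  with \<open>0 < x\<close> show "0 < s" using assms(2,3) by (cases s) (simp_all add: power_0_left)
  have "real (nat \<lfloor>meeting_bound n k t lam\<rfloor>) \<le> meeting_bound n k t lam"
    using \<open>0 \<le> meeting_bound n k t lam\<close> by linarith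
  then have "exp 1 * ((2 ^ k - 1) / real s ^ (k - 1)) * (real (nat \<lfloor>meeting_bound n k t lam\<rfloor>) + 1)
      \<le> x / real s ^ (k - 1)"
    using \<open>1 < 2 ^ k\<close> unfolding x_def by (simp add: divide_right_mono)
  also have "\<dots> \<le> 1"
    using \<open>x \<le> real s ^ (k - 1)\<close> \<open>0 < x\<close> \<open>0 < s\<close> by (simp add: divide_le_eq_1)
  finally show "exp 1 * ((2 ^ k - 1) / real s ^ (k - 1)) * (real (nat \<lfloor>meeting_bound n k t lam\<rfloor>) + 1) \<le> 1" .
qed

theorem lemma8:
  fixes X :: "'a set" and B :: "'a set multiset" and n k t lam l :: nat
  assumes "0 < l" and "0 < lam" and "n \<ge> k" and "k > t" and "t \<ge> 2"
    and "partial_system n k t lam X B"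
  shows "\<exists>U. presequencing l X B (nat \<lceil>sigma n k t lam\<rceil>) U"
proof -
  define s where "s = nat \<lceil>sigma n k t lam\<rceil>"
  define G where "G b = {b' \<in> set_mset B. b' \<noteq> b \<and> b' \<inter> b \<noteq> {}}" for b
  have "finite X" and blocks: "\<And>b. b \<in># B \<Longrightarrow> b \<subseteq> X \<and> card b = k"
    using assms(6) unfolding partial_system_def by auto
  have "0 < s" and condition: "exp 1 * ((2 ^ k - 1) / real s ^ (k - 1)) * (real (nat \<lfloor>meeting_bound n k t lam\<rfloor>) + 1) \<le> 1"
    using sigma_local_lemma_condition[OF assms(2) _ assms(4,3)] assms(5) unfolding s_def by auto
  have "avoiding (X \<rightarrow>\<^sub>E {..<s}) (colour_event X s) (set_mset B) \<noteq> {}"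
  proof (rule avoiding_nonempty_symmetric[where G = G, OF _ _ _ _ _ _ _ condition])
    show "card (G b) \<le> nat \<lfloor>meeting_bound n k t lam\<rfloor>" if "b \<in> set_mset B" for b
      using card_blocks_meeting_le[OF assms(6), of b] that assms(4,5) unfolding G_def
      by (simp add: le_nat_floor)
    show "real (card (colour_event X s b \<inter> avoiding (X \<rightarrow>\<^sub>E {..<s}) (colour_event X s) S))
      \<le> (2 ^ k - 1) / real s ^ (k - 1) * real (card (avoiding (X \<rightarrow>\<^sub>E {..<s}) (colour_event X s) S))"
      if "b \<in> set_mset B" "S \<subseteq> set_mset B - G b - {b}" for b S
      using card_colour_event_avoiding_le[OF \<open>finite X\<close> _ _ \<open>0 < s\<close>, of b S] that blocks assms(4)
      unfolding G_def by fastforce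
  qed (use \<open>finite X\<close> \<open>0 < s\<close> in \<open>auto simp: G_def PiE_eq_empty_iff finite_PiE\<close>)
  then obtain f where "f \<in> X \<rightarrow>\<^sub>E {..<s}" "\<And>b. b \<in># B \<Longrightarrow> \<not> consecutive_coloured s f b"
    unfolding avoiding_def colour_event_def by auto
  then have "\<exists>U. presequencing l X B s U"
    by (intro presequencing_of_colouring[OF \<open>finite X\<close> assms(1)]) (auto simp: PiE_iff)
  then show ?thesis unfolding s_def .
qed

end
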